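(* $\mathcal C_q^{\infty,\infty,4,3}\neq\mathcal C_{qs}^{\infty,\infty,4,3}$.
   Context: A strategy: Hilbert spaces $\mathcal H_A,\mathcal H_B$ (possibly infinite-dimensional), a unit vector $|\psi\rangle\in\mathcal H_A\otimes\mathcal H_B$, and for each question a projective measurement $\{A^a_x\}_{a}$ on $\mathcal H_A$, $\{B^b_y\}_{b}$ on $\mathcal H_B$, producing $p(a,b|x,y)=\langle\psi|A^a_x\otimes B^b_y|\psi\rangle$. $\mathcal C_{qs}^{\infty,\infty,4,3}$ is the set of correlations with countably infinite question sets and answer sets of sizes 4 (Alice) and 3 (Bob) produced by some strategy; $\mathcal C_{q}^{\infty,\infty,4,3}$ is the subset produced by strategies whose state $|\psi\rangle$ has finite Schmidt rank. *)

theory Defs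
  imports "HOL-Analysis.Analysis"
begin

text \<open>Concrete model: every Hilbert space relevant here is realised as l2 over a countable
index type (nat for each party, nat \<times> nat for the tensor product).\<close>

definition l2 :: "('i \<Rightarrow> complex) set" where
  "l2 = {f. (\<lambda>i. (cmod (f i))\<^sup>2) summable_on UNIV}"

definition sqnorm :: "('i \<Rightarrow> complex) \<Rightarrow> real" where
  "sqnorm f = infsum (\<lambda>i. (cmod (f i))\<^sup>2) UNIV"

definition ip :: "('i \<Rightarrow> complex) \<Rightarrow> ('i \<Rightarrow> complex) \<Rightarrow> complex" where
  "ip f g = infsum (\<lambda>i. cnj (f i) * g i) UNIV"

type_synonym vec = "nat \<Rightarrow> complex"
type_synonym op = "vec \<Rightarrow> vec"

definition is_bounded_op :: "op \<Rightarrow> bool" where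
  "is_bounded_op T \<longleftrightarrow>
     (\<forall>f\<in>l2. T f \<in> l2) \<and>
     (\<forall>f\<in>l2. \<forall>g\<in>l2. T (\<lambda>i. f i + g i) = (\<lambda>i. T f i + T g i)) \<and>
     (\<forall>f\<in>l2. \<forall>c. T (\<lambda>i. c * f i) = (\<lambda>i. c * T f i)) \<and>
     (\<exists>C. \<forall>f\<in>l2. sqnorm (T f) \<le> C * sqnorm f)"

definition is_projection :: "op \<Rightarrow> bool" where
  "is_projection P \<longleftrightarrow> is_bounded_op P \<and>
     (\<forall>f\<in>l2. P (P f) = P f) \<and>
     (\<forall>f\<in>l2. \<forall>g\<in>l2. ip (P f) g = ip f (P g))"

definition is_PVM :: "nat \<Rightarrow> (nat \<Rightarrow> op) \<Rightarrow> bool" where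
  "is_PVM k P \<longleftrightarrow> (\<forall>a<k. is_projection (P a)) \<and>
     (\<forall>f\<in>l2. (\<lambda>i. \<Sum>a<k. P a f i) = f)"

text \<open>Action of A \<otimes> B on a vector of l2(nat \<times> nat) = l2(nat) \<otimes> l2(nat).\<close>
definition tens_apply :: "op \<Rightarrow> op \<Rightarrow> (nat \<times> nat \<Rightarrow> complex) \<Rightarrow> (nat \<times> nat \<Rightarrow> complex)" where
  "tens_apply A B \<psi> =
     (\<lambda>(i, j). A (\<lambda>i'. B (\<lambda>j'. \<psi> (i', j')) j) i)"

definition is_state :: "(nat \<times> nat \<Rightarrow> complex) \<Rightarrow> bool" where
  "is_state \<psi> \<longleftrightarrow> \<psi> \<in> l2 \<and> sqnorm \<psi> = 1"

definition finite_schmidt_rank :: "(nat \<times> nat \<Rightarrow> complex) \<Rightarrow> bool" where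
  "finite_schmidt_rank \<psi> \<longleftrightarrow>
     (\<exists>n (u :: nat \<Rightarrow> vec) (v :: nat \<Rightarrow> vec).
        (\<forall>k<n. u k \<in> l2 \<and> v k \<in> l2) \<and>
        \<psi> = (\<lambda>(i, j). \<Sum>k<n. u k i * v k j))"

definition produced_by ::
  "nat \<Rightarrow> nat \<Rightarrow> (nat \<Rightarrow> nat \<Rightarrow> nat \<Rightarrow> nat \<Rightarrow> real) \<Rightarrow>
   (nat \<times> nat \<Rightarrow> complex) \<Rightarrow> (nat \<Rightarrow> nat \<Rightarrow> op) \<Rightarrow> (nat \<Rightarrow> nat \<Rightarrow> op) \<Rightarrow> bool" where
  "produced_by ka kb p \<psi> A B \<longleftrightarrow>
     is_state \<psi> \<and> (\<forall>x. is_PVM ka (A x)) \<and> (\<forall>y. is_PVM kb (B y)) \<and>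
     (\<forall>a b x y. p a b x y =
        (if a < ka \<and> b < kb then Re (ip \<psi> (tens_apply (A x a) (B y b) \<psi>)) else 0))"

definition C_qs :: "nat \<Rightarrow> nat \<Rightarrow> (nat \<Rightarrow> nat \<Rightarrow> nat \<Rightarrow> nat \<Rightarrow> real) set" where
  "C_qs ka kb = {p. \<exists>\<psi> A B. produced_by ka kb p \<psi> A B}"

definition C_q :: "nat \<Rightarrow> nat \<Rightarrow> (nat \<Rightarrow> nat \<Rightarrow> nat \<Rightarrow> nat \<Rightarrow> real) set" where
  "C_q ka kb = {p. \<exists>\<psi> A B. produced_by ka kb p \<psi> A B \<and> finite_schmidt_rank \<psi>}"

end

theory Submission
  imports Defs "HOL-Library.Function_Algebras"
begin

text \<open>Alice and Bob share psi = sum_i sqrt(q i) |i>|i> with q i = 2^-(i+1) and, on question x,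
  test whether their system is in the basis state x. Then p(1,1|x,y) is q x for x = y and 0
  otherwise: a diagonal matrix with infinitely many nonzero entries. For a state of finite Schmidt
  rank r, however, p(a,b|x,y) = Re (sum_{l,k<r} <u_l, A u_k> <v_l, B v_k>) is a real bilinear form
  in 2 r^2 coordinates, and a biorthogonal family in a finite-dimensional space is finite.\<close>

lemma l2_add:
  assumes "f \<in> l2" "g \<in> l2"
  shows "(\<lambda>i. f i + g i) \<in> l2"
proof -
  have "(cmod (f i + g i))\<^sup>2 \<le> 2 * (cmod (f i))\<^sup>2 + 2 * (cmod (g i))\<^sup>2" for i
  proof -
    have "(cmod (f i + g i))\<^sup>2 \<le> (cmod (f i) + cmod (g i))\<^sup>2"
      by (simp add: power_mono norm_triangle_ineq)
    also have "\<dots> \<le> 2 * (cmod (f i))\<^sup>2 + 2 * (cmod (g i))\<^sup>2"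
      using sum_squares_bound[of "cmod (f i)" "cmod (g i)"] by (simp add: power2_sum)
    finally show ?thesis .
  qed
  moreover have "(\<lambda>i. 2 * (cmod (f i))\<^sup>2 + 2 * (cmod (g i))\<^sup>2) summable_on UNIV"
    using assms unfolding l2_def by (intro summable_on_add summable_on_cmult_right) auto
  ultimately show ?thesis
    unfolding l2_def by (auto intro: summable_on_comparison_test)
qed

lemma l2_scale: "f \<in> l2 \<Longrightarrow> (\<lambda>i. c * f i) \<in> l2"
  unfolding l2_def by (auto simp: norm_mult power_mult_distrib intro: summable_on_cmult_right)

lemma l2_lincomb:
  assumes "finite K" "\<And>k. k \<in> K \<Longrightarrow> f k \<in> l2"
  shows "(\<lambda>i. \<Sum>k\<in>K. c k * f k i) \<in> l2"
  using assms
proof (induction K rule: finite_induct)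
  case empty
  then show ?case by (simp add: l2_def)
next
  case (insert k K)
  then show ?case by (simp add: l2_add l2_scale)
qed

lemma l2_cnj_mult_abs_summable:
  assumes "f \<in> l2" "g \<in> l2"
  shows "(\<lambda>i. norm (cnj (f i) * g i)) summable_on UNIV"
proof (rule abs_summable_product)
  show "(\<lambda>i. norm (cnj (f i) * cnj (f i))) summable_on UNIV"
    using assms(1) by (simp add: l2_def norm_mult power2_eq_square)
  show "(\<lambda>i. norm (g i * g i)) summable_on UNIV"
    using assms(2) by (simp add: l2_def norm_mult power2_eq_square)
qed

lemma bounded_op_lincomb:
  assumes T: "is_bounded_op T" and "finite K" "\<And>k. k \<in> K \<Longrightarrow> f k \<in> l2"
  shows "T (\<lambda>i. \<Sum>k\<in>K. c k * f k i) = (\<lambda>i. \<Sum>k\<in>K. c k * T (f k) i)"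
  using assms(2,3)
proof (induction K rule: finite_induct)
  case empty
  have zero: "(\<lambda>i. 0) \<in> l2"
    by (simp add: l2_def)
  have "\<forall>f\<in>l2. \<forall>c. T (\<lambda>i. c * f i) = (\<lambda>i. c * T f i)"
    using T unfolding is_bounded_op_def by blast
  from this[rule_format, OF zero, of 0] show ?case
    by simp
next
  case (insert k K)
  have "T (\<lambda>i. c k * f k i + (\<Sum>k\<in>K. c k * f k i))
      = (\<lambda>i. T (\<lambda>i. c k * f k i) i + T (\<lambda>i. \<Sum>k\<in>K. c k * f k i) i)"
    using T insert by (simp add: is_bounded_op_def l2_scale l2_lincomb)
  moreover have "T (\<lambda>i. c k * f k i) = (\<lambda>i. c k * T (f k) i)"
    using T insert unfolding is_bounded_op_def by blast
  ultimately show ?case using insert by simp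
qed

lemma tens_apply_finite_rank:
  fixes u v :: "nat \<Rightarrow> vec"
  assumes A: "is_bounded_op A" and B: "is_bounded_op B"
    and uv: "\<And>k. k < n \<Longrightarrow> u k \<in> l2 \<and> v k \<in> l2"
  shows "tens_apply A B (\<lambda>(i, j). \<Sum>k<n. u k i * v k j)
       = (\<lambda>(i, j). \<Sum>k<n. A (u k) i * B (v k) j)"
proof -
  have "B (\<lambda>j. \<Sum>k<n. u k i * v k j) = (\<lambda>j. \<Sum>k<n. u k i * B (v k) j)" for i
    using bounded_op_lincomb[OF B finite_lessThan, where f = v and c = "\<lambda>k. u k i"] uv
    by simp
  moreover have "A (\<lambda>i. \<Sum>k<n. B (v k) j * u k i) = (\<lambda>i. \<Sum>k<n. B (v k) j * A (u k) i)" for j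
    using bounded_op_lincomb[OF A finite_lessThan, where f = u and c = "\<lambda>k. B (v k) j"] uv
    by simp
  ultimately show ?thesis
    unfolding tens_apply_def by (auto simp: mult.commute)
qed

lemma has_sum_sum:
  fixes f :: "'k \<Rightarrow> 'x \<Rightarrow> 'a::topological_comm_monoid_add"
  assumes "finite K" "\<And>k. k \<in> K \<Longrightarrow> (f k has_sum s k) A"
  shows "((\<lambda>x. \<Sum>k\<in>K. f k x) has_sum (\<Sum>k\<in>K. s k)) A"
  using assms by (induction K rule: finite_induct) (auto intro: has_sum_add)

lemma has_sum_product:
  fixes a :: "'i \<Rightarrow> 'a::{banach, real_normed_field, second_countable_topology}"
    and b :: "'j \<Rightarrow> 'a"
  assumes a: "(\<lambda>i. norm (a i)) summable_on UNIV"
    and b: "(\<lambda>j. norm (b j)) summable_on UNIV"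
  shows "((\<lambda>(i, j). a i * b j) has_sum (infsum a UNIV * infsum b UNIV)) UNIV"
proof -
  let ?f = "\<lambda>(i, j). a i * b j"
  have "(\<lambda>z. norm (?f z)) summable_on UNIV \<times> UNIV"
  proof (rule Infinite_Sum.abs_summable_on_Sigma_iff[THEN iffD2], intro conjI ballI)
    show "(\<lambda>j. norm (?f (i, j))) summable_on UNIV" for i
      using summable_on_cmult_right[OF b, of "norm (a i)"] by (simp add: norm_mult)
    have "(\<lambda>i. norm (a i) * infsum (\<lambda>j. norm (b j)) UNIV) summable_on UNIV"
      using a by (rule summable_on_cmult_left)
    then show "(\<lambda>i. norm (infsum (\<lambda>j. norm (?f (i, j))) UNIV)) summable_on UNIV"
      by (simp add: norm_mult infsum_cmult_right[OF b] abs_mult infsum_nonneg)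
  qed
  then have summable: "?f summable_on UNIV \<times> UNIV"
    by (rule Infinite_Sum.abs_summable_summable)
  have "infsum ?f (UNIV \<times> UNIV) = infsum (\<lambda>i. infsum (\<lambda>j. a i * b j) UNIV) UNIV"
    using infsum_Sigma'_banach[of "\<lambda>i j. a i * b j" UNIV "\<lambda>_. UNIV"] summable by simp
  also have "\<dots> = infsum a UNIV * infsum b UNIV"
    by (simp add: infsum_cmult_right' infsum_cmult_left')
  finally show ?thesis
    using summable by (simp add: has_sum_iff)
qed

lemma has_sum_ip_tensor:
  fixes u f :: "'i \<Rightarrow> complex" and v g :: "'j \<Rightarrow> complex"
  assumes "u \<in> l2" "v \<in> l2" "f \<in> l2" "g \<in> l2"
  shows "((\<lambda>(i, j). cnj (u i * v j) * (f i * g j)) has_sum ip u f * ip v g) UNIV"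
proof -
  have "((\<lambda>(i, j). (cnj (u i) * f i) * (cnj (v j) * g j)) has_sum ip u f * ip v g) UNIV"
    unfolding ip_def using assms by (intro has_sum_product l2_cnj_mult_abs_summable)
  then show ?thesis
    by (simp add: case_prod_beta mult_ac)
qed

lemma ip_finite_rank:
  fixes u f :: "nat \<Rightarrow> 'i \<Rightarrow> complex" and v g :: "nat \<Rightarrow> 'j \<Rightarrow> complex"
  assumes "\<And>k. k < n \<Longrightarrow> u k \<in> l2 \<and> v k \<in> l2 \<and> f k \<in> l2 \<and> g k \<in> l2"
  shows "ip (\<lambda>(i, j). \<Sum>l<n. u l i * v l j) (\<lambda>(i, j). \<Sum>k<n. f k i * g k j)
       = (\<Sum>l<n. \<Sum>k<n. ip (u l) (f k) * ip (v l) (g k))"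
proof -
  let ?t = "\<lambda>l k. \<lambda>(i, j). cnj (u l i * v l j) * (f k i * g k j)"
  have "cnj (\<Sum>l<n. u l i * v l j) * (\<Sum>k<n. f k i * g k j) = (\<Sum>l<n. \<Sum>k<n. ?t l k (i, j))"
    for i j by (simp add: sum_product)
  moreover have "((\<lambda>z. \<Sum>l<n. \<Sum>k<n. ?t l k z)
      has_sum (\<Sum>l<n. \<Sum>k<n. ip (u l) (f k) * ip (v l) (g k))) UNIV"
    using assms by (intro has_sum_sum has_sum_ip_tensor) auto
  ultimately show ?thesis
    unfolding ip_def by (simp add: case_prod_beta infsumI)
qed

lemma Re_sum_mult_eq_real_sum:
  "Re (\<Sum>z\<in>D. M z * N z)
     = (\<Sum>(z, re)\<in>D \<times> UNIV.
          (if re then Re (M z) else Im (M z)) * (if re then Re (N z) else - Im (N z)))"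
  by (simp add: Re_sum sum.cartesian_product[symmetric] UNIV_bool)

lemma finite_rank_correlation_real_bilinear:
  assumes p: "produced_by ka kb p \<psi> A B" and "finite_schmidt_rank \<psi>"
  obtains E :: "((nat \<times> nat) \<times> bool) set" and m n where "finite E"
    and "\<And>a b x y. a < ka \<Longrightarrow> b < kb \<Longrightarrow> p a b x y = (\<Sum>w\<in>E. m a x w * n b y w)"
proof -
  from \<open>finite_schmidt_rank \<psi>\<close> obtain r and u v :: "nat \<Rightarrow> vec"
    where uv: "\<And>k. k < r \<Longrightarrow> u k \<in> l2 \<and> v k \<in> l2"
      and \<psi>: "\<psi> = (\<lambda>(i, j). \<Sum>k<r. u k i * v k j)"
    unfolding finite_schmidt_rank_def by blast
  define M where "M a x = (\<lambda>(l, k). ip (u l) (A x a (u k)))" for a x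
  define N where "N b y = (\<lambda>(l, k). ip (v l) (B y b (v k)))" for b y
  have "p a b x y = Re (\<Sum>z\<in>{..<r} \<times> {..<r}. M a x z * N b y z)"
    if "a < ka" "b < kb" for a b x y
  proof -
    have bounded: "is_bounded_op (A x a)" "is_bounded_op (B y b)"
      using p that unfolding produced_by_def is_PVM_def is_projection_def by auto
    then have l2:
      "\<And>k. k < r \<Longrightarrow> u k \<in> l2 \<and> v k \<in> l2 \<and> A x a (u k) \<in> l2 \<and> B y b (v k) \<in> l2"
      using uv unfolding is_bounded_op_def by blast
    have "p a b x y = Re (ip \<psi> (tens_apply (A x a) (B y b) \<psi>))"
      using p that unfolding produced_by_def by simp
    also have "tens_apply (A x a) (B y b) \<psi>
        = (\<lambda>(i, j). \<Sum>k<r. A x a (u k) i * B y b (v k) j)"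
      unfolding \<psi> using bounded uv by (rule tens_apply_finite_rank)
    also have "ip \<psi> \<dots>
        = (\<Sum>l<r. \<Sum>k<r. ip (u l) (A x a (u k)) * ip (v l) (B y b (v k)))"
      unfolding \<psi> using l2 by (rule ip_finite_rank)
    finally show ?thesis
      unfolding M_def N_def sum.cartesian_product by (simp add: case_prod_beta)
  qed
  then show thesis
    unfolding Re_sum_mult_eq_real_sum
    by (intro that[of "({..<r} \<times> {..<r}) \<times> UNIV"
          "\<lambda>a x (z, re). if re then Re (M a x z) else Im (M a x z)"
          "\<lambda>b y (z, re). if re then Re (N b y z) else - Im (N b y z)"])
      (simp_all add: split_def)
qed

lemma sum_fun_apply: "(\<Sum>a\<in>A. g a) w = (\<Sum>a\<in>A. g a w)"
  by (induction A rule: infinite_finite_induct) auto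

definition fun_scale :: "'a::field \<Rightarrow> ('e \<Rightarrow> 'a) \<Rightarrow> 'e \<Rightarrow> 'a" where
  "fun_scale r f = (\<lambda>w. r * f w)"

interpretation fun_vs: vector_space "fun_scale :: 'a::field \<Rightarrow> ('e \<Rightarrow> 'a) \<Rightarrow> 'e \<Rightarrow> 'a"
  by unfold_locales (auto simp: fun_scale_def fun_eq_iff algebra_simps)

lemma restrict_in_span_deltas:
  assumes "finite E"
  shows "(\<lambda>w. if w \<in> E then h w else 0) \<in> fun_vs.span ((\<lambda>w w'. if w' = w then 1 else 0) ` E)"
proof -
  have "(\<lambda>w. if w \<in> E then h w else 0) = (\<Sum>w\<in>E. fun_scale (h w) (\<lambda>w'. if w' = w then 1 else 0))"
    using assms by (simp add: fun_eq_iff sum_fun_apply fun_scale_def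
        if_distrib[of "\<lambda>t. _ * t"] cong: if_cong)
  also have "\<dots> \<in> fun_vs.span ((\<lambda>w w'. if w' = w then 1 else 0) ` E)"
    by (intro fun_vs.span_sum fun_vs.span_scale) (auto intro: fun_vs.span_base)
  finally show ?thesis .
qed

lemma finite_if_biorthogonal:
  fixes m n :: "'x \<Rightarrow> 'e \<Rightarrow> 'a::field"
  assumes E: "finite E"
    and biorth: "\<And>x y. x \<in> X \<Longrightarrow> y \<in> X \<Longrightarrow>
      (\<Sum>w\<in>E. m x w * n y w) = (if x = y then c x else 0)"
    and nonzero: "\<And>x. x \<in> X \<Longrightarrow> c x \<noteq> 0"
  shows "finite X"
proof -
  define V where "V x = (\<lambda>w. if w \<in> E then m x w else 0)" for x
  define L where "L y f = (\<Sum>w\<in>E. f w * n y w)" for y and f :: "'e \<Rightarrow> 'a"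
  have LV: "L y (V x) = (if x = y then c x else 0)" if "x \<in> X" "y \<in> X" for x y
    using biorth[OF that] by (simp add: L_def V_def cong: sum.cong)
  have L_lincomb: "L y (\<Sum>v\<in>S. fun_scale (r v) v) = (\<Sum>v\<in>S. r v * L y v)" for y S r
    by (simp add: L_def sum_fun_apply fun_scale_def sum_distrib_left sum_distrib_right mult.assoc
        sum.swap[of _ E])
  have inj: "inj_on V X"
  proof (rule inj_onI)
    fix x x' assume "x \<in> X" "x' \<in> X" "V x = V x'"
    then have "L x (V x') = c x" using LV by metis
    then show "x = x'"
      using LV[of x' x] nonzero \<open>x \<in> X\<close> \<open>x' \<in> X\<close> by (auto split: if_splits)
  qed
  have "fun_vs.independent (V ` X)"
    unfolding fun_vs.independent_explicit_module
  proof (intro allI impI)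
    fix T r v
    assume T: "finite T" "T \<subseteq> V ` X" and "v \<in> T"
      and comb: "(\<Sum>v\<in>T. fun_scale (r v) v) = 0"
    then obtain x where x: "x \<in> X" "v = V x" by auto
    have "L x v' = 0" if "v' \<in> T - {v}" for v'
      using that T x LV by auto
    then have "(\<Sum>v'\<in>T. r v' * L x v') = r v * L x v"
      using T \<open>v \<in> T\<close> by (simp add: sum.remove)
    moreover have "(\<Sum>v'\<in>T. r v' * L x v') = 0"
      using comb L_lincomb[where y = x and S = T and r = r] by (simp add: L_def)
    ultimately show "r v = 0"
      using LV[of x x] x nonzero by simp
  qed
  moreover have "V ` X \<subseteq> fun_vs.span ((\<lambda>w w'. if w' = w then 1 else 0) ` E)"
    unfolding V_def using E by (auto intro: restrict_in_span_deltas)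
  ultimately have "finite (V ` X)"
    using fun_vs.independent_span_bound E by blast
  then show ?thesis
    using inj finite_image_iff by blast
qed

definition coord_proj :: "nat set \<Rightarrow> op" where
  "coord_proj S f = (\<lambda>i. if i \<in> S then f i else 0)"

lemma coord_proj_l2: "f \<in> l2 \<Longrightarrow> coord_proj S f \<in> l2"
  unfolding l2_def coord_proj_def by (auto elim: summable_on_comparison_test)

lemma is_projection_coord_proj: "is_projection (coord_proj S)"
proof -
  have "sqnorm (coord_proj S f) \<le> 1 * sqnorm f" if "f \<in> l2" for f
    unfolding sqnorm_def using that coord_proj_l2[OF that]
    by (auto simp: l2_def coord_proj_def intro: infsum_mono)
  then have "\<exists>C. \<forall>f\<in>l2. sqnorm (coord_proj S f) \<le> C * sqnorm f"
    by blast
  then have "is_bounded_op (coord_proj S)"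
    unfolding is_bounded_op_def by (simp add: coord_proj_l2) (simp add: coord_proj_def fun_eq_iff)
  moreover have "ip (coord_proj S f) g = ip f (coord_proj S g)" for f g
    unfolding ip_def coord_proj_def by (intro infsum_cong) auto
  ultimately show ?thesis
    unfolding is_projection_def by (auto simp: coord_proj_def)
qed

definition point_measurement :: "nat \<Rightarrow> nat \<Rightarrow> op" where
  "point_measurement x a = coord_proj (if a = 0 then - {x} else if a = 1 then {x} else {})"

lemma is_PVM_point_measurement:
  assumes "2 \<le> k"
  shows "is_PVM k (point_measurement x)"
proof -
  have "(\<Sum>a<k. point_measurement x a f i) = f i" for f i
  proof -
    have "(\<Sum>a<k. point_measurement x a f i) = (\<Sum>a<2. point_measurement x a f i)"
      using assms by (intro sum.mono_neutral_right) (auto simp: point_measurement_def coord_proj_def)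
    also have "\<dots> = f i"
      by (simp add: eval_nat_numeral point_measurement_def coord_proj_def)
    finally show ?thesis .
  qed
  then show ?thesis
    unfolding is_PVM_def point_measurement_def by (simp add: is_projection_coord_proj)
qed

definition diag_state :: "(nat \<Rightarrow> real) \<Rightarrow> nat \<times> nat \<Rightarrow> complex" where
  "diag_state q = (\<lambda>(i, j). if i = j then complex_of_real (sqrt (q i)) else 0)"

lemma cmod_diag_state_sq:
  assumes "\<And>i. 0 \<le> q i"
  shows "(cmod (diag_state q (i, j)))\<^sup>2 = (if i = j then q i else 0)"
  using assms by (simp add: diag_state_def)

lemma is_state_diag_state:
  assumes q: "\<And>i. 0 \<le> q i" and "(q has_sum 1) UNIV"
  shows "is_state (diag_state q)"
proof -
  let ?g = "\<lambda>z. (cmod (diag_state q z))\<^sup>2"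
  have "(?g has_sum 1) (range (\<lambda>i. (i, i)))"
    using has_sum_reindex[of "\<lambda>i. (i, i)" UNIV ?g 1] \<open>(q has_sum 1) UNIV\<close>
    by (simp add: inj_on_def o_def cmod_diag_state_sq[OF q])
  moreover have "(?g has_sum 1) (range (\<lambda>i. (i, i))) \<longleftrightarrow> (?g has_sum 1) UNIV"
    by (rule has_sum_cong_neutral) (auto simp: diag_state_def)
  ultimately have "(?g has_sum 1) UNIV"
    by simp
  then show ?thesis
    unfolding is_state_def l2_def sqnorm_def by (auto simp: summable_on_def infsumI)
qed

lemma diag_state_point_measurement_correlation:
  assumes q: "\<And>i. 0 \<le> q i"
  shows "Re (ip (diag_state q)
      (tens_apply (point_measurement x 1) (point_measurement y 1) (diag_state q)))
    = (if x = y then q x else 0)"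
proof -
  have "tens_apply (point_measurement x 1) (point_measurement y 1) (diag_state q)
      = (\<lambda>z. if z = (x, y) then diag_state q z else 0)"
    by (auto simp: tens_apply_def point_measurement_def coord_proj_def fun_eq_iff)
  then have "ip (diag_state q)
      (tens_apply (point_measurement x 1) (point_measurement y 1) (diag_state q))
    = cnj (diag_state q (x, y)) * diag_state q (x, y)"
    unfolding ip_def by (subst infsum_cong_neutral[where T = "{(x, y)}"]) auto
  also have "\<dots> = complex_of_real ((cmod (diag_state q (x, y)))\<^sup>2)"
    by (subst complex_norm_square) (simp add: mult.commute)
  finally show ?thesis
    by (simp add: cmod_diag_state_sq[OF q])
qed

lemma C_qs_diagonal_correlation:
  assumes "2 \<le> ka" "2 \<le> kb" and q: "\<And>i. 0 \<le> q i" "(q has_sum 1) UNIV"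
  obtains p where "p \<in> C_qs ka kb" and "\<And>x y. p 1 1 x y = (if x = y then q x else 0)"
proof
  let ?p = "\<lambda>a b x y. if a < ka \<and> b < kb then Re (ip (diag_state q)
    (tens_apply (point_measurement x a) (point_measurement y b) (diag_state q))) else 0"
  have "produced_by ka kb ?p (diag_state q) point_measurement point_measurement"
    unfolding produced_by_def using assms by (simp add: is_state_diag_state is_PVM_point_measurement)
  then show "?p \<in> C_qs ka kb"
    unfolding C_qs_def by blast
  show "?p 1 1 x y = (if x = y then q x else 0)" for x y
    using assms diag_state_point_measurement_correlation[OF q(1)] by simp
qed

lemma has_sum_half_powers: "((\<lambda>i. (1 / 2 :: real) ^ Suc i) has_sum 1) UNIV"
proof -
  have "(\<lambda>i. (1 / 2 :: real) ^ Suc i) sums ((1 / 2) * (1 / (1 - 1 / 2)))"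
    unfolding power_Suc by (intro sums_mult geometric_sums) simp
  then show ?thesis
    by (intro sums_nonneg_imp_has_sum) simp_all
qed

theorem C_q_ne_C_qs:
  assumes "2 \<le> ka" "2 \<le> kb"
  shows "C_q ka kb \<noteq> C_qs ka kb"
proof
  define q :: "nat \<Rightarrow> real" where "q i = (1 / 2) ^ Suc i" for i
  have q_pos: "q i > 0" for i
    by (simp add: q_def)
  obtain p where "p \<in> C_qs ka kb" and p11: "\<And>x y. p 1 1 x y = (if x = y then q x else 0)"
    using C_qs_diagonal_correlation[OF assms _ has_sum_half_powers] q_pos less_imp_le
    unfolding q_def by blast
  moreover assume "C_q ka kb = C_qs ka kb"
  ultimately obtain \<psi> A B where "produced_by ka kb p \<psi> A B" "finite_schmidt_rank \<psi>"
    unfolding C_q_def by blast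
  then obtain E :: "((nat \<times> nat) \<times> bool) set" and m n where "finite E"
    and pmn: "\<And>a b x y. a < ka \<Longrightarrow> b < kb \<Longrightarrow> p a b x y = (\<Sum>w\<in>E. m a x w * n b y w)"
    by (rule finite_rank_correlation_real_bilinear) blast
  have "(\<Sum>w\<in>E. m 1 x w * n 1 y w) = (if x = y then q x else 0)" for x y
    using pmn[of 1 1 x y] p11[of x y] assms by simp
  then have "finite (UNIV :: nat set)"
    using q_pos
    by (intro finite_if_biorthogonal[OF \<open>finite E\<close>, where m = "m 1" and n = "n 1" and c = q])
      (simp_all add: less_le)
  then show False
    by simp
qed

theorem corollary2:
  shows "C_q 4 3 \<noteq> C_qs 4 3"
  by (rule C_q_ne_C_qs) simp_all

end
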